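(* Let $n\ge 2$. (1) The set $\mathcal{O}_n(\mathbb{R})=\{O_M\mid M\in Mat^{tnz}_{2n}(\mathbb{R})\}$ of orientation sign matrices is in bijection with the set of right cosets of $K_n$ in $P_n$, and has cardinality $2^{n-1}(n-1)!$. (2) The set $\mathcal{S}^{tnz}_{2n}(\mathbb{R})$ of non-empty strata, which is in bijection with the orbit space $(\mathbb{Z}/2\mathbb{Z})\backslash\mathcal{O}_n(\mathbb{R})$, has cardinality $2^{n-2}(n-1)!$.
   Context: $Mat^{tnz}_{2n}(\mathbb{R})$ is the set of real $2\times n$ matrices all of whose $2\times2$ maximal minors are nonzero. For $M=(v_1,\dots,v_n)\in Mat^{tnz}_{2n}(\mathbb{R})$ the orientation sign matrix is $O_M=[\operatorname{sgn}\det(v_i,v_j)]_{1\le i,j\le n}$. The group $\mathbb{Z}/2\mathbb{Z}=\{\pm1\}$ acts on $\mathcal{O}_n(\mathbb{R})$ by $-1\bullet O_M=O_N$ with $N=(v_n,\dots,v_1)$ (so $O_N=-O_M=O_M^t$). $Gr^{tnz}_{2n}(\mathbb{R})=GL_2(\mathbb{R})\backslash Mat^{tnz}_{2n}(\mathbb{R})$; for $\mathcal{C}\subseteq\binom{[n]}{2}$ the stratum $\mathcal{S}^{tnz}_{\mathcal{C}}(\mathbb{R})$ consists of $GL_2(\mathbb{R})M$ such that the minor $\Delta_I(M)$ is positive exactly for $I\in\mathcal{C}$, or negative exactly for $I\in\mathcal{C}$; $\mathcal{S}^{tnz}_{2n}(\mathbb{R})$ is the set of non-empty strata. $P_n=\{(a_1,\dots,a_n)\in\{\pm1,\dots,\pm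 n\}^n\mid i\mapsto|a_i|\text{ is a permutation}\}$ is the signed permutation group, identified with the group of signed permutation matrices via $(a_1,\dots,a_n)\mapsto(\operatorname{sgn}(a_1)e_{|a_1|}^t,\dots,\operatorname{sgn}(a_n)e_{|a_n|}^t)$ (columns; $e_k$ standard basis vectors) with matrix multiplication; $|P_n|=2^nn!$. $K_n$ is the cyclic subgroup of order $2n$ generated by $(-n,1,2,\dots,n-1)\in P_n$. *)

theory Defs
  imports "HOL-Algebra.Coset" "HOL-Algebra.Generated_Groups" Complex_Main
begin

(* Columns of a real 2 x n matrix are indexed by {1..n}; a matrix is a map
   nat => real x real, required to be (0,0) outside {1..n}. *)

definition det2 :: "real \<times> real \<Rightarrow> real \<times> real \<Rightarrow> real" where
  "det2 v w = fst v * snd w - snd v * fst w"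

definition pairs :: "nat \<Rightarrow> nat set set" where
  "pairs n = {I. I \<subseteq> {1..n} \<and> card I = 2}"

definition minor :: "(nat \<Rightarrow> real \<times> real) \<Rightarrow> nat set \<Rightarrow> real" where
  "minor M I = det2 (M (Min I)) (M (Max I))"

definition Mat_tnz :: "nat \<Rightarrow> (nat \<Rightarrow> real \<times> real) set" where
  "Mat_tnz n = {M. (\<forall>i. i \<notin> {1..n} \<longrightarrow> M i = (0, 0)) \<and>
                   (\<forall>I \<in> pairs n. minor M I \<noteq> 0)}"

definition orient :: "nat \<Rightarrow> (nat \<Rightarrow> real \<times> real) \<Rightarrow> nat \<Rightarrow> nat \<Rightarrow> real" where
  "orient n M = (\<lambda>i j. if i \<in> {1..n} \<and> j \<in> {1..n} then sgn (det2 (M i) (M j)) else 0)"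

definition Ospace :: "nat \<Rightarrow> (nat \<Rightarrow> nat \<Rightarrow> real) set" where
  "Ospace n = orient n ` Mat_tnz n"

(* Z/2 action: -1 acts by O |-> -O ; orbit space *)
definition Ospace_orbits :: "nat \<Rightarrow> (nat \<Rightarrow> nat \<Rightarrow> real) set set" where
  "Ospace_orbits n = {{Q, (\<lambda>i j. - Q i j)} | Q. Q \<in> Ospace n}"

(* GL_2(R) acting on the left: A = (a,b,c,d) the matrix [[a,b],[c,d]] *)
definition gl_act :: "real \<times> real \<times> real \<times> real \<Rightarrow> (nat \<Rightarrow> real \<times> real) \<Rightarrow> (nat \<Rightarrow> real \<times> real)" where
  "gl_act A M = (case A of (a, b, c, d) \<Rightarrow>
      (\<lambda>i. (a * fst (M i) + b * snd (M i), c * fst (M i) + d * snd (M i))))"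

definition GL2 :: "(real \<times> real \<times> real \<times> real) set" where
  "GL2 = {(a, b, c, d). a * d - b * c \<noteq> 0}"

definition gl_orbit :: "(nat \<Rightarrow> real \<times> real) \<Rightarrow> (nat \<Rightarrow> real \<times> real) set" where
  "gl_orbit M = {gl_act A M | A. A \<in> GL2}"

definition Gr_tnz :: "nat \<Rightarrow> (nat \<Rightarrow> real \<times> real) set set" where
  "Gr_tnz n = gl_orbit ` Mat_tnz n"

definition stratum :: "nat \<Rightarrow> nat set set \<Rightarrow> (nat \<Rightarrow> real \<times> real) set set" where
  "stratum n C = {X \<in> Gr_tnz n. \<exists>M \<in> X.
      (\<forall>I \<in> pairs n. minor M I > 0 \<longleftrightarrow> I \<in> C) \<or>
      (\<forall>I \<in> pairs n. minor M I < 0 \<longleftrightarrow> I \<in> C)}"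

definition strata :: "nat \<Rightarrow> (nat \<Rightarrow> real \<times> real) set set set" where
  "strata n = {stratum n C | C. C \<subseteq> pairs n \<and> stratum n C \<noteq> {}}"

(* signed permutations (a_1,...,a_n), stored as nat => int, zero outside {1..n} *)
definition Pn :: "nat \<Rightarrow> (nat \<Rightarrow> int) set" where
  "Pn n = {a. (\<forall>i. i \<notin> {1..n} \<longrightarrow> a i = 0) \<and>
              bij_betw (\<lambda>i. nat \<bar>a i\<bar>) {1..n} {1..n}}"

(* product of the corresponding signed permutation matrices:
   (AB) e_i = sgn(b_i) A e_|b_i| = sgn(b_i) sgn(a_|b_i|) e_|a_|b_i||  *)
definition sp_mult :: "nat \<Rightarrow> (nat \<Rightarrow> int) \<Rightarrow> (nat \<Rightarrow> int) \<Rightarrow> (nat \<Rightarrow> int)" where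
  "sp_mult n a b = (\<lambda>i. if i \<in> {1..n} then sgn (b i) * a (nat \<bar>b i\<bar>) else 0)"

definition sp_one :: "nat \<Rightarrow> nat \<Rightarrow> int" where
  "sp_one n = (\<lambda>i. if i \<in> {1..n} then int i else 0)"

definition SP :: "nat \<Rightarrow> (nat \<Rightarrow> int) monoid" where
  "SP n = \<lparr>carrier = Pn n, mult = sp_mult n, one = sp_one n\<rparr>"

definition Kgen :: "nat \<Rightarrow> nat \<Rightarrow> int" where
  "Kgen n = (\<lambda>i. if i = 1 then - int n else if 2 \<le> i \<and> i \<le> n then int i - 1 else 0)"

definition Kn :: "nat \<Rightarrow> (nat \<Rightarrow> int) set" where
  "Kn n = generate (SP n) {Kgen n}"

end

theory Submission
  imports
    Defs
    "HOL-Combinatorics.Permutations"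
    "HOL-Algebra.Multiplicative_Group"
    "HOL-Library.Function_Algebras"
begin

(*
  An orientation sign matrix O_M is determined by the signs e_i = sgn det(v_1, v_i), i >= 2, and
  by the order of the cotangents c_i = (v_1 . v_i) / det(v_1, v_i) of the angles from v_1 to v_i:
  the identity |v_1|^2 det(v_i, v_j) = det(v_1, v_i) det(v_1, v_j) (c_i - c_j) gives
  sgn det(v_i, v_j) = e_i e_j sgn (c_i - c_j). Every sign vector e and every permutation p of
  {2..n} occur, realised by v_1 = (1, 0) and v_i = e_i (p_i, 1), so O_n has 2^(n-1) (n-1)!
  elements. By Lagrange this is also the number of cosets of K_n, a cyclic group of order 2n,
  in P_n, a group of order 2^n n!.

  GL_2 multiplies all maximal minors by the determinant, so the stratum of M only depends on
  O_M up to sign, and O_M and -O_M (realised by the reflection (x, y) |-> (x, -y)) give the same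
  stratum. As O_M has no zero entry off the diagonal, O_M differs from -O_M, and there are half
  as many strata as orientation sign matrices.
*)

lemma pairs_cases:
  assumes "I \<in> pairs n"
  obtains i j where "I = {i, j}" "i < j" "i \<in> {1..n}" "j \<in> {1..n}"
proof -
  from assms have "I \<subseteq> {1..n}" "card I = 2" by (auto simp: pairs_def)
  then obtain x y where "I = {x, y}" "x \<noteq> y" by (auto simp: card_2_iff)
  with \<open>I \<subseteq> {1..n}\<close> show thesis
  proof (cases "x < y")
    case False
    with \<open>x \<noteq> y\<close> have "y < x" by simp
    with \<open>I = {x, y}\<close> \<open>I \<subseteq> {1..n}\<close> show thesis
      using that[of y x] by (simp add: insert_commute)
  qed (use that in simp)
qed

lemma pair_in_pairs: "i \<noteq> j \<Longrightarrow> i \<in> {1..n} \<Longrightarrow> j \<in> {1..n} \<Longrightarrow> {i, j} \<in> pairs n"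
  by (auto simp: pairs_def)

lemma minor_pair: "i < j \<Longrightarrow> minor M {i, j} = det2 (M i) (M j)"
  by (simp add: minor_def)

lemma det2_swap: "det2 v w = - det2 w v"
  by (simp add: det2_def)

lemma det2_self [simp]: "det2 v v = 0"
  by (simp add: det2_def)

lemma Mat_tnz_det_neq_0:
  assumes "M \<in> Mat_tnz n" "i \<in> {1..n}" "j \<in> {1..n}" "i \<noteq> j"
  shows "det2 (M i) (M j) \<noteq> 0"
proof -
  have ordered: "det2 (M i) (M j) \<noteq> 0" if "i < j" "i \<in> {1..n}" "j \<in> {1..n}" for i j
    using assms(1) that pair_in_pairs[of i j n] by (auto simp: Mat_tnz_def minor_pair)
  show ?thesis
  proof (cases "i < j")
    case False
    with assms(4) have "j < i" by simp
    then show ?thesis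
      using ordered[of j i] assms(2,3) by (simp add: det2_swap[of "M i"])
  qed (use ordered assms in simp)
qed

lemma Mat_tnzI:
  assumes "\<And>i. i \<notin> {1..n} \<Longrightarrow> M i = (0, 0)"
    and "\<And>i j. i \<in> {1..n} \<Longrightarrow> j \<in> {1..n} \<Longrightarrow> i < j \<Longrightarrow> det2 (M i) (M j) \<noteq> 0"
  shows "M \<in> Mat_tnz n"
  using assms by (auto simp: Mat_tnz_def minor_pair elim!: pairs_cases)

definition cot_angle :: "real \<times> real \<Rightarrow> real \<times> real \<Rightarrow> real" where
  "cot_angle u v = (fst u * fst v + snd u * snd v) / det2 u v"

lemma sgn_cot_diff:
  assumes "det2 u v \<noteq> 0" "det2 u w \<noteq> 0"
  shows "sgn (cot_angle u v - cot_angle u w) = sgn (det2 u v) * sgn (det2 u w) * sgn (det2 v w)"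
proof -
  have "u \<noteq> (0, 0)"
    using assms(1) by (auto simp: det2_def)
  then have norm_pos: "fst u ^ 2 + snd u ^ 2 > 0"
    by (auto simp: prod_eq_iff sum_power2_gt_zero_iff)
  have "cot_angle u v - cot_angle u w = (fst u ^ 2 + snd u ^ 2) * det2 v w / (det2 u v * det2 u w)"
    using assms by (simp add: cot_angle_def det2_def field_simps) (simp add: algebra_simps power2_eq_square)
  then have "sgn (cot_angle u v - cot_angle u w) = sgn (det2 v w) / (sgn (det2 u v) * sgn (det2 u w))"
    using norm_pos by (simp add: sgn_mult)
  also have "\<dots> = sgn (det2 u v) * sgn (det2 u w) * sgn (det2 v w)"
    using assms by (simp add: sgn_if)
  finally show ?thesis .
qed

lemma sgn_eq_if_same_sign:
  fixes x y :: real
  assumes "x < 0 \<longleftrightarrow> y < 0" "x > 0 \<longleftrightarrow> y > 0"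
  shows "sgn x = sgn y"
  using assms by (auto simp: sgn_real_def)

lemma permutes_same_order_exists:
  fixes f :: "nat \<Rightarrow> 'a::linorder"
  assumes "inj_on f {m..n}"
  obtains p where "p permutes {m..n}"
    "\<And>i j. i \<in> {m..n} \<Longrightarrow> j \<in> {m..n} \<Longrightarrow> p i < p j \<longleftrightarrow> f i < f j"
proof -
  define S where "S = {m..n}"
  define p where "p i = (if i \<in> S then m + card {k \<in> S. f k < f i} else i)" for i
  have mono: "p i < p j" if "i \<in> S" "j \<in> S" "f i < f j" for i j
  proof -
    have "{k \<in> S. f k < f i} \<subset> {k \<in> S. f k < f j}"
      using that by auto
    then show ?thesis
      using that by (simp add: p_def psubset_card_mono S_def)
  qed
  have order: "p i < p j \<longleftrightarrow> f i < f j" if "i \<in> S" "j \<in> S" for i j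
    using mono[OF that] mono[OF that(2,1)] inj_onD[OF assms _ that[unfolded S_def]]
    by (metis less_asym' linorder_neqE)
  have "inj_on p S"
  proof (rule inj_onI, rule ccontr)
    fix i j assume ij: "i \<in> S" "j \<in> S" "p i = p j" "i \<noteq> j"
    then have "f i \<noteq> f j"
      using assms by (auto simp: S_def dest: inj_onD)
    then show False
      using order[OF ij(1,2)] order[OF ij(2,1)] ij(3) by (auto simp: neq_iff)
  qed
  moreover have "p ` S \<subseteq> S"
  proof
    fix y assume "y \<in> p ` S"
    then obtain i where i: "i \<in> S" "y = p i" by auto
    have "{k \<in> S. f k < f i} \<subset> S" using i by auto
    then have "card {k \<in> S. f k < f i} < card S"
      by (rule psubset_card_mono[rotated]) (simp add: S_def)
    then show "y \<in> S" using i by (auto simp: p_def S_def)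
  qed
  ultimately have "bij_betw p S S"
    by (simp add: bij_betw_def endo_inj_surj S_def)
  then have "p permutes S"
    by (rule bij_imp_permutes) (simp add: p_def)
  with order show thesis
    using that by (simp add: S_def)
qed

lemma permutes_rank:
  assumes "p permutes {m..n}" "i \<in> {m..n}"
  shows "p i = m + card {j \<in> {m..n}. p j < p i}"
proof -
  have bij: "bij_betw p {m..n} {m..n}"
    using assms(1) by (rule permutes_imp_bij)
  have pi: "p i \<in> {m..n}"
    using permutes_in_image[OF assms(1)] assms(2) by simp
  have "p ` {j \<in> {m..n}. p j < p i} = {m..<p i}"
  proof
    show "p ` {j \<in> {m..n}. p j < p i} \<subseteq> {m..<p i}"
      using permutes_in_image[OF assms(1)] by fastforce
    show "{m..<p i} \<subseteq> p ` {j \<in> {m..n}. p j < p i}"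
      using bij pi by (force simp: bij_betw_def)
  qed
  moreover have "inj_on p {j \<in> {m..n}. p j < p i}"
    using bij by (auto simp: bij_betw_def intro: inj_on_subset)
  ultimately have "card {j \<in> {m..n}. p j < p i} = p i - m"
    using card_image by fastforce
  with pi show ?thesis by simp
qed

lemma permutes_eq_if_same_order:
  fixes p q :: "nat \<Rightarrow> nat"
  assumes "p permutes {m..n}" "q permutes {m..n}"
    and "\<And>i j. i \<in> {m..n} \<Longrightarrow> j \<in> {m..n} \<Longrightarrow> p i < p j \<longleftrightarrow> q i < q j"
  shows "p = q"
proof
  fix i
  show "p i = q i"
  proof (cases "i \<in> {m..n}")
    case True
    then have "{j \<in> {m..n}. p j < p i} = {j \<in> {m..n}. q j < q i}"
      using assms(3) by auto
    then show ?thesis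
      using permutes_rank[OF assms(1) True] permutes_rank[OF assms(2) True] by simp
  qed (metis assms(1,2) permutes_not_in)
qed

lemma card_involution_orbits:
  assumes "finite A" "\<And>x. x \<in> A \<Longrightarrow> f x \<in> A"
    and "\<And>x. x \<in> A \<Longrightarrow> f (f x) = x" "\<And>x. x \<in> A \<Longrightarrow> f x \<noteq> x"
  shows "2 * card ((\<lambda>x. {x, f x}) ` A) = card A"
proof -
  let ?C = "(\<lambda>x. {x, f x}) ` A"
  have "\<Union> ?C = A"
    using assms(2) by auto
  moreover have "2 * card ?C = card (\<Union> ?C)"
  proof (rule card_partition)
    show "finite ?C" "finite (\<Union> ?C)"
      using assms(1,2) by auto
    show "card c = 2" if "c \<in> ?C" for c
      using that assms(4) by (fastforce simp: card_insert_if)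
    show "c1 \<inter> c2 = {}" if "c1 \<in> ?C" "c2 \<in> ?C" "c1 \<noteq> c2" for c1 c2
      using that assms(3) by auto metis+
  qed
  ultimately show ?thesis by simp
qed

lemma bij_betw_induced:
  assumes "\<And>x y. x \<in> A \<Longrightarrow> y \<in> A \<Longrightarrow> h x = h y \<longleftrightarrow> k x = k y"
  shows "bij_betw (k \<circ> inv_into A h) (h ` A) (k ` A)"
proof (rule bij_betw_imageI)
  have inv: "inv_into A h (h x) \<in> A" "h (inv_into A h (h x)) = h x" if "x \<in> A" for x
    using that by (auto simp: inv_into_into f_inv_into_f)
  then have k_inv: "k (inv_into A h (h x)) = k x" if "x \<in> A" for x
    using assms that by blast
  show "inj_on (k \<circ> inv_into A h) (h ` A)"
    using k_inv assms by (auto intro!: inj_onI)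
  show "(k \<circ> inv_into A h) ` h ` A = k ` A"
    using k_inv by (force simp: image_comp)
qed

section \<open>Normal form of orientation sign matrices\<close>

definition signs :: "nat \<Rightarrow> (nat \<Rightarrow> real) set" where
  "signs n = PiE {2..n} (\<lambda>_. {-1, 1})"

(* e_i = sgn det(v_1, v_i), and p lists v_2, ..., v_n in the order of cot_angle v_1 v_i. *)
definition orient_nf :: "nat \<Rightarrow> (nat \<Rightarrow> real) \<Rightarrow> (nat \<Rightarrow> nat) \<Rightarrow> nat \<Rightarrow> nat \<Rightarrow> real" where
  "orient_nf n e p = (\<lambda>i j. if i \<in> {1..n} \<and> j \<in> {1..n} then
      (if i = j then 0 else if i = 1 then e j else if j = 1 then - e i
       else e i * e j * sgn (real (p i) - real (p j))) else 0)"

definition nf_matrix :: "nat \<Rightarrow> (nat \<Rightarrow> real) \<Rightarrow> (nat \<Rightarrow> nat) \<Rightarrow> nat \<Rightarrow> real \<times> real" where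
  "nf_matrix n e p = (\<lambda>i. if i \<in> {1..n} then (if i = 1 then (1, 0) else (e i * real (p i), e i))
                          else (0, 0))"

lemma orient_eq_orient_nf:
  assumes M: "M \<in> Mat_tnz n"
    and e: "\<And>i. i \<in> {2..n} \<Longrightarrow> e i = sgn (det2 (M 1) (M i))"
    and p: "\<And>i j. i \<in> {2..n} \<Longrightarrow> j \<in> {2..n} \<Longrightarrow>
              p i < p j \<longleftrightarrow> cot_angle (M 1) (M i) < cot_angle (M 1) (M j)"
  shows "orient n M = orient_nf n e p"
proof (intro ext)
  fix i j
  have det1: "det2 (M 1) (M k) \<noteq> 0" if "k \<in> {2..n}" for k
    using Mat_tnz_det_neq_0[OF M] that by auto
  have e_sq: "e k * e k = 1" if "k \<in> {2..n}" for k
    using e[OF that] det1[OF that] by (simp add: sgn_if)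
  have inner: "sgn (det2 (M i) (M j)) = e i * e j * sgn (real (p i) - real (p j))"
    if ij: "i \<in> {2..n}" "j \<in> {2..n}"
  proof -
    let ?c = "cot_angle (M 1)"
    have "sgn (real (p i) - real (p j)) = sgn (?c (M i) - ?c (M j))"
      using p[OF ij] p[OF ij(2,1)] by (intro sgn_eq_if_same_sign) auto
    also have "\<dots> = e i * e j * sgn (det2 (M i) (M j))"
      using sgn_cot_diff[OF det1[OF ij(1)] det1[OF ij(2)]] e[OF ij(1)] e[OF ij(2)] by simp
    finally show ?thesis
      using e_sq[OF ij(1)] e_sq[OF ij(2)] by (simp add: algebra_simps)
  qed
  show "orient n M i j = orient_nf n e p i j"
  proof (cases "i \<in> {1..n} \<and> j \<in> {1..n} \<and> i \<noteq> j")
    case True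
    then consider "i = 1" "j \<in> {2..n}" | "j = 1" "i \<in> {2..n}" | "i \<in> {2..n}" "j \<in> {2..n}"
      by fastforce
    then show ?thesis
    proof cases
      case 3
      with True show ?thesis by (simp add: orient_def orient_nf_def inner)
    qed (use True in \<open>auto simp: orient_def orient_nf_def e det2_swap[of "M i"] sgn_minus\<close>)
  qed (auto simp: orient_def orient_nf_def)
qed

lemma signs_pm1: "e \<in> signs n \<Longrightarrow> i \<in> {2..n} \<Longrightarrow> e i = -1 \<or> e i = 1"
  by (auto simp: signs_def)

lemma nf_matrix_Mat_tnz:
  assumes "e \<in> signs n" "p permutes {2..n}"
  shows "nf_matrix n e p \<in> Mat_tnz n"
proof (rule Mat_tnzI)
  fix i j assume ij: "i \<in> {1..n}" "j \<in> {1..n}" "i < j"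
  then have "e j \<noteq> 0" "i \<noteq> 1 \<Longrightarrow> e i \<noteq> 0"
    using signs_pm1[OF assms(1), of j] signs_pm1[OF assms(1), of i] by auto
  moreover have "p i \<noteq> p j"
    using permutes_inj[OF assms(2)] ij(3) by (auto dest: injD)
  ultimately show "det2 (nf_matrix n e p i) (nf_matrix n e p j) \<noteq> 0"
    using ij by (auto simp: nf_matrix_def det2_def algebra_simps)
qed (auto simp: nf_matrix_def)

lemma orient_nf_matrix:
  assumes "e \<in> signs n" "p permutes {2..n}"
  shows "orient n (nf_matrix n e p) = orient_nf n e p"
proof (rule orient_eq_orient_nf[OF nf_matrix_Mat_tnz[OF assms]])
  fix i j assume i: "i \<in> {2..n}" and j: "j \<in> {2..n}"
  have nf: "nf_matrix n e p 1 = (1, 0)" "nf_matrix n e p k = (e k * real (p k), e k)"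
    if "k \<in> {2..n}" for k
    using that by (auto simp: nf_matrix_def)
  have "e k \<noteq> 0" if "k \<in> {2..n}" for k
    using signs_pm1[OF assms(1) that] by auto
  then have "cot_angle (nf_matrix n e p 1) (nf_matrix n e p k) = real (p k)" if "k \<in> {2..n}" for k
    using that nf[OF that] by (simp add: cot_angle_def det2_def)
  then show "p i < p j \<longleftrightarrow> cot_angle (nf_matrix n e p 1) (nf_matrix n e p i)
                             < cot_angle (nf_matrix n e p 1) (nf_matrix n e p j)"
    using i j by simp
  show "e i = sgn (det2 (nf_matrix n e p 1) (nf_matrix n e p i))"
    using nf[OF i] signs_pm1[OF assms(1) i] by (auto simp: det2_def)
qed

lemma orient_nf_exists:
  assumes M: "M \<in> Mat_tnz n"
  obtains e p where "e \<in> signs n" "p permutes {2..n}" "orient n M = orient_nf n e p"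
proof -
  let ?c = "\<lambda>i. cot_angle (M 1) (M i)"
  define e where "e = restrict (\<lambda>i. sgn (det2 (M 1) (M i))) {2..n}"
  have det: "det2 (M i) (M j) \<noteq> 0" if "i \<in> {1..n}" "j \<in> {1..n}" "i \<noteq> j" for i j
    using Mat_tnz_det_neq_0[OF M that] .
  have "inj_on ?c {2..n}"
  proof (rule inj_onI, rule ccontr)
    fix i j assume ij: "i \<in> {2..n}" "j \<in> {2..n}" "?c i = ?c j" "i \<noteq> j"
    then show False
      using sgn_cot_diff[of "M 1" "M i" "M j"] det[of 1 i] det[of 1 j] det[of i j]
      by (auto simp: sgn_0_0)
  qed
  then obtain p where p: "p permutes {2..n}" "\<And>i j. i \<in> {2..n} \<Longrightarrow> j \<in> {2..n} \<Longrightarrow> p i < p j \<longleftrightarrow> ?c i < ?c j"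
    using permutes_same_order_exists by blast
  have "e \<in> signs n"
    using det[of 1] by (auto simp: e_def signs_def sgn_if)
  moreover have "orient n M = orient_nf n e p"
    by (rule orient_eq_orient_nf[OF M _ p(2)]) (simp add: e_def)
  ultimately show thesis
    using that p(1) by blast
qed

lemma orient_nf_inj:
  assumes "e \<in> signs n" "p permutes {2..n}" "e' \<in> signs n" "p' permutes {2..n}"
    and eq: "orient_nf n e p = orient_nf n e' p'"
  shows "e = e' \<and> p = p'"
proof
  have ee: "e i = e' i" if "i \<in> {2..n}" for i
    using fun_cong[OF fun_cong[OF eq, of 1], of i] that by (simp add: orient_nf_def)
  show "e = e'"
    using assms(1,3) unfolding signs_def by (rule PiE_ext) (use ee in auto)
  show "p = p'"
  proof (rule permutes_eq_if_same_order[OF assms(2,4)])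
    fix i j assume ij: "i \<in> {2..n}" "j \<in> {2..n}"
    have "e i * e j * sgn (real (p i) - real (p j)) = e i * e j * sgn (real (p' i) - real (p' j))"
      using fun_cong[OF fun_cong[OF eq, of i], of j] ij ee
      by (cases "i = j") (auto simp: orient_nf_def)
    then have "sgn (real (p i) - real (p j)) = sgn (real (p' i) - real (p' j))"
      using signs_pm1[OF assms(1) ij(1)] signs_pm1[OF assms(1) ij(2)] by auto
    then show "p i < p j \<longleftrightarrow> p' i < p' j"
      by (metis diff_less_0_iff_less of_nat_less_iff sgn_less)
  qed
qed

lemma Ospace_eq: "Ospace n = (\<lambda>(e, p). orient_nf n e p) ` (signs n \<times> {p. p permutes {2..n}})"
proof
  show "Ospace n \<subseteq> (\<lambda>(e, p). orient_nf n e p) ` (signs n \<times> {p. p permutes {2..n}})"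
    unfolding Ospace_def by (force elim: orient_nf_exists)
  show "(\<lambda>(e, p). orient_nf n e p) ` (signs n \<times> {p. p permutes {2..n}}) \<subseteq> Ospace n"
    unfolding Ospace_def using nf_matrix_Mat_tnz orient_nf_matrix by (force simp: image_iff)
qed

lemma finite_Ospace: "finite (Ospace n)"
  by (simp add: Ospace_eq signs_def finite_PiE finite_permutations)

lemma card_Ospace: "card (Ospace n) = 2 ^ (n - 1) * fact (n - 1)"
proof -
  have "inj_on (\<lambda>(e, p). orient_nf n e p) (signs n \<times> {p. p permutes {2..n}})"
    using orient_nf_inj by (fastforce intro!: inj_onI)
  then have "card (Ospace n) = card (signs n) * card {p. p permutes {2..n}}"
    by (simp add: Ospace_eq card_image card_cartesian_product)
  then show ?thesis
    by (simp add: signs_def card_PiE card_permutations numeral_2_eq_2)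
qed

section \<open>Strata\<close>

definition pos_minors :: "nat \<Rightarrow> (nat \<Rightarrow> real \<times> real) \<Rightarrow> nat set set" where
  "pos_minors n M = {I \<in> pairs n. minor M I > 0}"

lemma det2_gl_act:
  "det2 (gl_act (a, b, c, d) M i) (gl_act (a, b, c, d) M j) = (a * d - b * c) * det2 (M i) (M j)"
  by (simp add: gl_act_def det2_def algebra_simps)

lemma minor_gl_act: "minor (gl_act (a, b, c, d) M) I = (a * d - b * c) * minor M I"
  by (simp add: minor_def det2_gl_act)

lemma gl_act_Mat_tnz:
  assumes "A \<in> GL2" "M \<in> Mat_tnz n"
  shows "gl_act A M \<in> Mat_tnz n"
  using assms by (cases A) (auto simp: Mat_tnz_def GL2_def minor_gl_act, auto simp: gl_act_def)

lemma gl_orbit_refl: "M \<in> gl_orbit M"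
proof -
  have "gl_act (1, 0, 0, 1) M = M" "(1, 0, 0, 1) \<in> GL2"
    by (simp_all add: gl_act_def GL2_def)
  then show ?thesis
    unfolding gl_orbit_def by force
qed

lemma Gr_tnz_memberD: "X \<in> Gr_tnz n \<Longrightarrow> M \<in> X \<Longrightarrow> M \<in> Mat_tnz n"
  by (auto simp: Gr_tnz_def gl_orbit_def gl_act_Mat_tnz)

lemma pos_minors_gl_act:
  assumes "A \<in> GL2" "M \<in> Mat_tnz n"
  shows "pos_minors n (gl_act A M) = pos_minors n M \<or> pos_minors n (gl_act A M) = pairs n - pos_minors n M"
proof -
  obtain a b c d where A: "A = (a, b, c, d)" by (cases A)
  have minor: "minor (gl_act A M) I = (a * d - b * c) * minor M I" for I
    by (simp add: A minor_gl_act)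
  have "a * d - b * c > 0 \<or> a * d - b * c < 0"
    using assms(1) by (auto simp: A GL2_def)
  then show ?thesis
    using assms(2) by (auto simp: pos_minors_def minor Mat_tnz_def zero_less_mult_iff linorder_neq_iff)
qed

lemma stratum_compl: "stratum n (pairs n - C) = stratum n C"
proof -
  have "(\<forall>I \<in> pairs n. minor M I > 0 \<longleftrightarrow> I \<in> pairs n - C) \<longleftrightarrow> (\<forall>I \<in> pairs n. minor M I < 0 \<longleftrightarrow> I \<in> C)"
       "(\<forall>I \<in> pairs n. minor M I < 0 \<longleftrightarrow> I \<in> pairs n - C) \<longleftrightarrow> (\<forall>I \<in> pairs n. minor M I > 0 \<longleftrightarrow> I \<in> C)"
    if "M \<in> Mat_tnz n" for M
    using that by (auto simp: Mat_tnz_def linorder_neq_iff)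
  then show ?thesis
    unfolding stratum_def by (blast dest: Gr_tnz_memberD)
qed

lemma stratum_cases:
  assumes "gl_orbit M \<in> stratum n C" "M \<in> Mat_tnz n"
  shows "C \<inter> pairs n = pos_minors n M \<or> C \<inter> pairs n = pairs n - pos_minors n M"
proof -
  obtain A where A: "A \<in> GL2" and
    sign: "(\<forall>I \<in> pairs n. minor (gl_act A M) I > 0 \<longleftrightarrow> I \<in> C) \<or>
           (\<forall>I \<in> pairs n. minor (gl_act A M) I < 0 \<longleftrightarrow> I \<in> C)"
    using assms(1) unfolding stratum_def gl_orbit_def by blast
  have "C \<inter> pairs n = pos_minors n (gl_act A M) \<or> C \<inter> pairs n = pairs n - pos_minors n (gl_act A M)"
    using sign gl_act_Mat_tnz[OF A assms(2)]
    by (auto simp: pos_minors_def Mat_tnz_def linorder_neq_iff)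
  then show ?thesis
    using pos_minors_gl_act[OF A assms(2)] by (auto simp: pos_minors_def)
qed

lemma gl_orbit_in_stratum: "M \<in> Mat_tnz n \<Longrightarrow> gl_orbit M \<in> stratum n (pos_minors n M)"
  unfolding stratum_def Gr_tnz_def pos_minors_def using gl_orbit_refl by blast

lemma orient_pos_minors:
  assumes "M \<in> Mat_tnz n"
  shows "orient n M i j = (if i \<in> {1..n} \<and> j \<in> {1..n} \<and> i \<noteq> j
                           then if {i, j} \<in> pos_minors n M \<longleftrightarrow> i < j then 1 else -1 else 0)"
proof -
  have ordered: "sgn (det2 (M i) (M j)) = (if {i, j} \<in> pos_minors n M then 1 else -1)"
    if "i < j" "i \<in> {1..n}" "j \<in> {1..n}" for i j
    using that Mat_tnz_det_neq_0[OF assms, of i j] pair_in_pairs[of i j n]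
    by (auto simp: pos_minors_def minor_pair sgn_if)
  show ?thesis
  proof (cases i j rule: linorder_cases)
    case greater
    have "{i, j} = {j, i}" by blast
    moreover have "orient n M i j = - sgn (det2 (M j) (M i))" if "i \<in> {1..n}" "j \<in> {1..n}"
      using that by (simp add: orient_def det2_swap[of "M i"] sgn_minus)
    ultimately show ?thesis
      using ordered[of j i] greater by (auto simp: orient_def)
  qed (use ordered in \<open>auto simp: orient_def\<close>)
qed

lemma orient_determined_by_pos_minors:
  assumes "M \<in> Mat_tnz n" "M' \<in> Mat_tnz n"
  shows "pos_minors n M' = pos_minors n M \<Longrightarrow> orient n M' = orient n M"
    and "pos_minors n M' = pairs n - pos_minors n M \<Longrightarrow> orient n M' = - orient n M"
  by (auto simp: fun_eq_iff orient_pos_minors[OF assms(1)] orient_pos_minors[OF assms(2)] pair_in_pairs)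

lemma orient_neq_0: "M \<in> Mat_tnz n \<Longrightarrow> i \<in> {1..n} \<Longrightarrow> j \<in> {1..n} \<Longrightarrow> i \<noteq> j \<Longrightarrow> orient n M i j \<noteq> 0"
  by (simp add: orient_pos_minors)

lemma uminus_orient_Ospace:
  assumes "Q \<in> Ospace n"
  shows "- Q \<in> Ospace n"
proof -
  obtain M where M: "M \<in> Mat_tnz n" "Q = orient n M"
    using assms by (auto simp: Ospace_def)
  have "(1, 0, 0, -1) \<in> GL2"
    by (simp add: GL2_def)
  then have "gl_act (1, 0, 0, -1) M \<in> Mat_tnz n"
    using M(1) by (rule gl_act_Mat_tnz)
  moreover have "det2 (gl_act (1, 0, 0, -1) M i) (gl_act (1, 0, 0, -1) M j) = - det2 (M i) (M j)" for i j
    by (simp add: det2_gl_act)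
  then have "orient n (gl_act (1, 0, 0, -1) M) = - Q"
    using M(2) by (simp add: fun_eq_iff orient_def sgn_minus)
  ultimately show ?thesis
    unfolding Ospace_def by (metis image_eqI)
qed

definition stratum_of :: "nat \<Rightarrow> (nat \<Rightarrow> nat \<Rightarrow> real) \<Rightarrow> (nat \<Rightarrow> real \<times> real) set set" where
  "stratum_of n Q = stratum n {I \<in> pairs n. Q (Min I) (Max I) > 0}"

lemma stratum_of_orient: "M \<in> Mat_tnz n \<Longrightarrow> stratum_of n (orient n M) = stratum n (pos_minors n M)"
  unfolding stratum_of_def
  by (rule arg_cong[where f = "stratum n"])
    (auto simp: pos_minors_def orient_def minor_def pair_in_pairs elim!: pairs_cases)

lemma strata_eq: "strata n = stratum_of n ` Ospace n"
proof
  show "strata n \<subseteq> stratum_of n ` Ospace n"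
  proof
    fix S assume "S \<in> strata n"
    then obtain C where C: "S = stratum n C" "C \<subseteq> pairs n" "stratum n C \<noteq> {}"
      unfolding strata_def by blast
    then obtain M where M: "M \<in> Mat_tnz n" "gl_orbit M \<in> stratum n C"
      by (auto simp: stratum_def Gr_tnz_def)
    then have "C = pos_minors n M \<or> C = pairs n - pos_minors n M"
      using stratum_cases C(2) by (metis Int_absorb2)
    then have "S = stratum_of n (orient n M)"
      using C(1) stratum_compl stratum_of_orient[OF M(1)] by metis
    with M(1) show "S \<in> stratum_of n ` Ospace n"
      by (auto simp: Ospace_def)
  qed
  show "stratum_of n ` Ospace n \<subseteq> strata n"
    unfolding strata_def Ospace_def
    using stratum_of_orient gl_orbit_in_stratum by (fastforce simp: pos_minors_def)
qed

lemma stratum_of_uminus: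
  assumes "Q \<in> Ospace n"
  shows "stratum_of n (- Q) = stratum_of n Q"
proof -
  obtain M where M: "M \<in> Mat_tnz n" "Q = orient n M"
    using assms by (auto simp: Ospace_def)
  have "Q (Min I) (Max I) \<noteq> 0" if "I \<in> pairs n" for I
    using that M orient_neq_0[OF M(1)] by (auto elim!: pairs_cases)
  then have "{I \<in> pairs n. (- Q) (Min I) (Max I) > 0} = pairs n - {I \<in> pairs n. Q (Min I) (Max I) > 0}"
    by (auto simp: linorder_neq_iff)
  then show ?thesis
    by (simp add: stratum_of_def stratum_compl)
qed

lemma stratum_of_eq_iff:
  assumes "Q \<in> Ospace n" "R \<in> Ospace n"
  shows "stratum_of n Q = stratum_of n R \<longleftrightarrow> {Q, - Q} = {R, - R}"
proof
  assume eq: "stratum_of n Q = stratum_of n R"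
  obtain M where M: "M \<in> Mat_tnz n" "Q = orient n M"
    using assms(1) by (auto simp: Ospace_def)
  obtain M' where M': "M' \<in> Mat_tnz n" "R = orient n M'"
    using assms(2) by (auto simp: Ospace_def)
  have "gl_orbit M \<in> stratum n (pos_minors n M')"
    using eq gl_orbit_in_stratum[OF M(1)] by (simp add: M M' stratum_of_orient)
  moreover have "pos_minors n M' \<inter> pairs n = pos_minors n M'"
    by (auto simp: pos_minors_def)
  ultimately have "pos_minors n M' = pos_minors n M \<or> pos_minors n M' = pairs n - pos_minors n M"
    using stratum_cases[OF _ M(1)] by metis
  then have "R = Q \<or> R = - Q"
    using orient_determined_by_pos_minors[OF M(1) M'(1)] M(2) M'(2) by blast
  then show "{Q, - Q} = {R, - R}"
    by auto
next
  assume "{Q, - Q} = {R, - R}"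
  then have "R = Q \<or> R = - Q"
    by (metis doubleton_eq_iff minus_minus)
  then show "stratum_of n Q = stratum_of n R"
    using stratum_of_uminus[OF assms(1)] by auto
qed

lemma Ospace_orbits_eq: "Ospace_orbits n = (\<lambda>Q. {Q, - Q}) ` Ospace n"
  by (auto simp: Ospace_orbits_def fun_eq_iff)

lemma strata_bij_Ospace_orbits:
  "bij_betw ((\<lambda>Q. {Q, - Q}) \<circ> inv_into (Ospace n) (stratum_of n)) (strata n) (Ospace_orbits n)"
  unfolding strata_eq Ospace_orbits_eq by (rule bij_betw_induced) (rule stratum_of_eq_iff)

lemma card_Ospace_orbits:
  assumes "n \<ge> 2"
  shows "card (Ospace_orbits n) = 2 ^ (n - 2) * fact (n - 1)"
proof -
  have "- Q \<noteq> Q" if "Q \<in> Ospace n" for Q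
  proof
    assume "- Q = Q"
    then have "Q 1 2 = - Q 1 2"
      by (metis uminus_apply)
    with that assms show False
      using orient_neq_0[of _ n 1 2] by (auto simp: Ospace_def)
  qed
  then have "2 * card (Ospace_orbits n) = card (Ospace n)"
    unfolding Ospace_orbits_eq
    by (intro card_involution_orbits) (auto simp: finite_Ospace uminus_orient_Ospace)
  also have "\<dots> = 2 * (2 ^ (n - 2) * fact (n - 1))"
  proof -
    obtain m where "n = Suc (Suc m)"
      using assms by (metis add_2_eq_Suc le_Suc_ex)
    then show ?thesis by (simp add: card_Ospace)
  qed
  finally show ?thesis by simp
qed

section \<open>The group of signed permutations\<close>

lemma SP_simps [simp]:
  "carrier (SP n) = Pn n" "monoid.mult (SP n) = sp_mult n" "monoid.one (SP n) = sp_one n"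
  by (simp_all add: SP_def)

lemma Pn_in_range:
  assumes "a \<in> Pn n" "i \<in> {1..n}"
  shows "nat \<bar>a i\<bar> \<in> {1..n}"
  using assms by (auto simp: Pn_def bij_betw_def)

lemma Pn_neq_0: "a \<in> Pn n \<Longrightarrow> i \<in> {1..n} \<Longrightarrow> a i \<noteq> 0"
  using Pn_in_range by fastforce

lemma Pn_outside: "a \<in> Pn n \<Longrightarrow> i \<notin> {1..n} \<Longrightarrow> a i = 0"
  by (simp add: Pn_def)

lemma sp_mult_Pn:
  assumes "a \<in> Pn n" "b \<in> Pn n"
  shows "sp_mult n a b \<in> Pn n"
proof -
  have "bij_betw ((\<lambda>i. nat \<bar>a i\<bar>) \<circ> (\<lambda>i. nat \<bar>b i\<bar>)) {1..n} {1..n}"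
    using assms by (auto simp: Pn_def intro: bij_betw_trans)
  then have "bij_betw (\<lambda>i. nat \<bar>sp_mult n a b i\<bar>) {1..n} {1..n}"
    by (rule bij_betw_cong[THEN iffD1, rotated])
      (use Pn_neq_0[OF assms(2)] in \<open>simp add: sp_mult_def abs_mult\<close>)
  then show ?thesis
    by (simp add: Pn_def sp_mult_def)
qed

lemma sp_one_Pn: "sp_one n \<in> Pn n"
proof -
  have "bij_betw (\<lambda>i. nat \<bar>sp_one n i\<bar>) {1..n} {1..n}"
    by (rule bij_betw_cong[THEN iffD2, of _ _ id]) (auto simp: sp_one_def)
  then show ?thesis
    by (simp add: Pn_def sp_one_def)
qed

lemma sp_inverse_Pn:
  assumes "a \<in> Pn n"
  obtains b where "b \<in> Pn n" "sp_mult n b a = sp_one n"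
proof -
  define p where "p = (\<lambda>i. nat \<bar>a i\<bar>)"
  have bp: "bij_betw p {1..n} {1..n}"
    using assms by (simp add: Pn_def p_def)
  define q where "q = inv_into {1..n} p"
  have bq: "bij_betw q {1..n} {1..n}"
    using bp by (simp add: q_def bij_betw_inv_into)
  have q_in: "q j \<in> {1..n}" if "j \<in> {1..n}" for j
    using bq that by (auto simp: bij_betw_def)
  define b where "b j = (if j \<in> {1..n} then sgn (a (q j)) * int (q j) else 0)" for j
  have "nat \<bar>b j\<bar> = q j" if "j \<in> {1..n}" for j
    using that Pn_neq_0[OF assms q_in[OF that]] by (simp add: b_def abs_mult)
  then have "bij_betw (\<lambda>j. nat \<bar>b j\<bar>) {1..n} {1..n}"
    by (rule bij_betw_cong[THEN iffD2, OF _ bq])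
  then have "b \<in> Pn n"
    by (simp add: Pn_def b_def)
  moreover have "sp_mult n b a i = sp_one n i" for i
  proof (cases "i \<in> {1..n}")
    case True
    have "p i \<in> {1..n}" "q (p i) = i"
      using bp True by (auto simp: q_def bij_betw_def bij_betw_inv_into_left)
    then have "sp_mult n b a i = sgn (a i) * (sgn (a i) * int i)"
      using True by (simp add: sp_mult_def b_def p_def)
    also have "\<dots> = int i"
      using Pn_neq_0[OF assms True] by (simp add: sgn_if)
    finally show ?thesis
      using True by (simp add: sp_one_def)
  qed (auto simp: sp_mult_def sp_one_def)
  ultimately show thesis
    using that by auto
qed

lemma group_SP: "group (SP n)"
proof (rule groupI)
  fix a b c assume abc: "a \<in> carrier (SP n)" "b \<in> carrier (SP n)" "c \<in> carrier (SP n)"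
  have "sp_mult n (sp_mult n a b) c i = sp_mult n a (sp_mult n b c) i" for i
  proof (cases "i \<in> {1..n}")
    case True
    then show ?thesis
      using abc Pn_in_range[of c n i] Pn_neq_0[of c n i]
      by (simp add: sp_mult_def abs_mult sgn_mult)
  qed (auto simp: sp_mult_def)
  then show "a \<otimes>\<^bsub>SP n\<^esub> b \<otimes>\<^bsub>SP n\<^esub> c = a \<otimes>\<^bsub>SP n\<^esub> (b \<otimes>\<^bsub>SP n\<^esub> c)"
    by (simp add: fun_eq_iff)
next
  fix a assume a: "a \<in> carrier (SP n)"
  have "sp_mult n (sp_one n) a i = a i" for i
    using a Pn_in_range[of a n i] Pn_outside[of a n i]
    by (cases "i \<in> {1..n}") (simp_all add: sp_mult_def sp_one_def sgn_mult_abs)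
  then show "\<one>\<^bsub>SP n\<^esub> \<otimes>\<^bsub>SP n\<^esub> a = a"
    by (simp add: fun_eq_iff)
  show "\<exists>b \<in> carrier (SP n). b \<otimes>\<^bsub>SP n\<^esub> a = \<one>\<^bsub>SP n\<^esub>"
    using sp_inverse_Pn[of a n] a by auto
qed (simp_all add: sp_mult_Pn sp_one_Pn)

definition signed_perm :: "nat \<Rightarrow> (nat \<Rightarrow> int) \<times> (nat \<Rightarrow> nat) \<Rightarrow> nat \<Rightarrow> int" where
  "signed_perm n = (\<lambda>(s, p) i. if i \<in> {1..n} then s i * int (p i) else 0)"

lemma signed_perm_image:
  "signed_perm n ` (PiE {1..n} (\<lambda>_. {-1, 1}) \<times> {p. p permutes {1..n}}) = Pn n"
proof (intro equalityI subsetI)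
  fix a assume "a \<in> signed_perm n ` (PiE {1..n} (\<lambda>_. {-1, 1}) \<times> {p. p permutes {1..n}})"
  then obtain s p where s: "s \<in> PiE {1..n} (\<lambda>_. {-1, 1})" and p: "p permutes {1..n}"
    and a: "a = signed_perm n (s, p)"
    by auto
  have "bij_betw (\<lambda>i. nat \<bar>a i\<bar>) {1..n} {1..n}"
  proof (rule bij_betw_cong[THEN iffD2, OF _ permutes_imp_bij[OF p]])
    fix i assume i: "i \<in> {1..n}"
    with s have "s i \<in> {-1, 1}" by auto
    with i a show "nat \<bar>a i\<bar> = p i"
      by (auto simp: signed_perm_def abs_mult)
  qed
  then show "a \<in> Pn n"
    by (simp add: Pn_def a signed_perm_def)
next
  fix a assume a: "a \<in> Pn n"
  define s where "s = restrict (\<lambda>i. sgn (a i)) {1..n}"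
  define p where "p i = (if i \<in> {1..n} then nat \<bar>a i\<bar> else i)" for i
  have "bij_betw p {1..n} {1..n}"
    by (rule bij_betw_cong[THEN iffD1, rotated]) (use a in \<open>simp_all add: Pn_def p_def\<close>)
  then have "p permutes {1..n}"
    by (rule bij_imp_permutes) (auto simp: p_def)
  moreover have "s \<in> PiE {1..n} (\<lambda>_. {-1, 1})"
    using Pn_neq_0[OF a] by (auto simp: s_def sgn_if)
  moreover have "signed_perm n (s, p) = a"
    using Pn_outside[OF a] by (auto simp: fun_eq_iff signed_perm_def s_def p_def sgn_mult_abs)
  ultimately show "a \<in> signed_perm n ` (PiE {1..n} (\<lambda>_. {-1, 1}) \<times> {p. p permutes {1..n}})"
    by force
qed

lemma signed_perm_inj:
  assumes s: "s \<in> PiE {1..n} (\<lambda>_. {-1, 1})" "s' \<in> PiE {1..n} (\<lambda>_. {-1, 1})"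
    and p: "p permutes {1..n}" "p' permutes {1..n}"
    and eq: "signed_perm n (s, p) = signed_perm n (s', p')"
  shows "s = s' \<and> p = p'"
proof -
  have eq_on: "s i = s' i \<and> p i = p' i" if i: "i \<in> {1..n}" for i
  proof -
    have "s i * int (p i) = s' i * int (p' i)"
      using fun_cong[OF eq, of i] i by (simp add: signed_perm_def)
    moreover have "p i \<in> {1..n}" "p' i \<in> {1..n}"
      using permutes_in_image[OF p(1), THEN iffD2, OF i] permutes_in_image[OF p(2), THEN iffD2, OF i] .
    moreover have "s i \<in> {-1, 1}" "s' i \<in> {-1, 1}"
      using s i by auto
    ultimately show ?thesis
      by (auto simp: algebra_simps)
  qed
  have "s = s'"
    using s by (rule PiE_ext) (use eq_on in auto)
  moreover have "p = p'"
    using eq_on p by (metis permutes_not_in ext)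
  ultimately show ?thesis ..
qed

lemma inj_on_signed_perm:
  "inj_on (signed_perm n) (PiE {1..n} (\<lambda>_. {-1, 1}) \<times> {p. p permutes {1..n}})"
  by (rule inj_onI) (use signed_perm_inj in force)

lemma card_Pn: "card (Pn n) = 2 ^ n * fact n"
proof -
  have "card (Pn n) = card (PiE {1..n} (\<lambda>_. {-1, 1 :: int})) * card {p. p permutes {1..n}}"
    by (simp only: signed_perm_image[symmetric] card_image[OF inj_on_signed_perm] card_cartesian_product)
  then show ?thesis
    by (simp add: card_PiE card_permutations numeral_2_eq_2)
qed

lemma Kgen_Pn:
  assumes "n \<ge> 1"
  shows "Kgen n \<in> Pn n"
proof -
  define f where "f i = (if i = 1 then n else i - 1)" for i
  have "inj_on f {1..n}"
    by (rule inj_onI) (auto simp: f_def split: if_splits)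
  moreover have "f ` {1..n} \<subseteq> {1..n}"
    using assms by (auto simp: f_def)
  ultimately have "bij_betw f {1..n} {1..n}"
    by (simp add: bij_betw_def endo_inj_surj)
  then have "bij_betw (\<lambda>i. nat \<bar>Kgen n i\<bar>) {1..n} {1..n}"
    by (rule bij_betw_cong[THEN iffD1, rotated]) (auto simp: Kgen_def f_def)
  then show ?thesis
    by (simp add: Pn_def Kgen_def)
qed

(* Kgen n maps the signed basis vector labelled q to the one labelled q - 1, where e_i is
   labelled i - 1 and -e_i is labelled n + i - 1 in Z/2nZ; cyc n turns a label into the signed
   index, so rot n k is the k-th power of Kgen n. *)
definition cyc :: "nat \<Rightarrow> int \<Rightarrow> int" where
  "cyc n q = (if q < int n then q + 1 else - (q - int n + 1))"

definition rot :: "nat \<Rightarrow> nat \<Rightarrow> nat \<Rightarrow> int" where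
  "rot n k = (\<lambda>i. if i \<in> {1..n} then cyc n ((int i - 1 - int k) mod (2 * int n)) else 0)"

lemma cyc_minus_n:
  assumes "n > 0"
  shows "cyc n ((x - int n) mod (2 * int n)) = - cyc n (x mod (2 * int n))"
proof -
  define q where "q = x mod (2 * int n)"
  have q: "0 \<le> q" "q < 2 * int n"
    using assms by (simp_all add: q_def)
  have "(x - int n) mod (2 * int n) = (q - int n) mod (2 * int n)"
    by (simp add: q_def mod_diff_left_eq)
  also have "\<dots> = (if q < int n then q + int n else q - int n)"
  proof (cases "q < int n")
    case True
    have "(q - int n) mod (2 * int n) = (q - int n + 2 * int n) mod (2 * int n)"
      by (simp only: mod_add_self2)
    with True q show ?thesis by simp
  qed (use q in simp)
  finally show ?thesis
    using q by (auto simp: cyc_def q_def[symmetric])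
qed

lemma rot_0: "rot n 0 = sp_one n"
  by (auto simp: fun_eq_iff rot_def sp_one_def cyc_def)

lemma rot_Suc:
  assumes "n \<ge> 1"
  shows "sp_mult n (rot n k) (Kgen n) = rot n (Suc k)"
proof
  fix i
  consider "i = 1" | "i \<in> {2..n}" | "i \<notin> {1..n}"
    by fastforce
  then show "sp_mult n (rot n k) (Kgen n) i = rot n (Suc k) i"
  proof cases
    case 1
    have "sp_mult n (rot n k) (Kgen n) 1 = - cyc n ((int n - 1 - int k) mod (2 * int n))"
      using assms by (simp add: sp_mult_def Kgen_def rot_def)
    also have "\<dots> = cyc n ((int n - 1 - int k - int n) mod (2 * int n))"
      using cyc_minus_n[of n "int n - 1 - int k"] assms by simp
    finally show ?thesis
      using 1 assms by (simp add: rot_def)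
  next
    case 2
    then have "Kgen n i = int (i - 1)" "i - 1 \<in> {1..n}" "i \<in> {1..n}"
      by (auto simp: Kgen_def of_nat_diff)
    moreover have "nat (int i - 1) = i - 1"
      using 2 by auto
    ultimately have "sp_mult n (rot n k) (Kgen n) i = rot n k (i - 1)"
      using 2 by (simp add: sp_mult_def)
    also have "\<dots> = rot n (Suc k) i"
      using 2 \<open>i - 1 \<in> {1..n}\<close> \<open>i \<in> {1..n}\<close> by (simp add: rot_def of_nat_diff algebra_simps)
    finally show ?thesis .
  qed (auto simp: sp_mult_def rot_def)
qed

lemma Kgen_pow:
  assumes "n \<ge> 1"
  shows "Kgen n [^]\<^bsub>SP n\<^esub> k = rot n k"
  by (induction k) (simp_all add: rot_0 rot_Suc[OF assms])

lemma rot_eq_one_iff: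
  assumes "n \<ge> 1"
  shows "rot n k = sp_one n \<longleftrightarrow> 2 * n dvd k"
proof
  assume "rot n k = sp_one n"
  then have "cyc n ((- int k) mod (2 * int n)) = 1"
    using fun_cong[of _ _ 1] assms by (fastforce simp: rot_def sp_one_def)
  then have "(- int k) mod (2 * int n) = 0"
    using assms by (auto simp: cyc_def split: if_splits)
  then have "int (2 * n) dvd int k"
    by (simp add: mod_eq_0_iff_dvd)
  then show "2 * n dvd k"
    by (simp only: of_nat_dvd_iff)
next
  assume "2 * n dvd k"
  then obtain c where "int k = (2 * int n) * c"
    by (metis dvd_def of_nat_mult of_nat_numeral)
  then have "(int i - 1 - int k) mod (2 * int n) = (int i - 1) mod (2 * int n)" for i
    using mod_mult_self2[of "int i - 1" "2 * int n" "- c"] by simp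
  then have "rot n k = rot n 0"
    by (simp add: fun_eq_iff rot_def)
  then show "rot n k = sp_one n"
    by (simp add: rot_0)
qed

lemma card_Kn:
  assumes "n \<ge> 1"
  shows "card (Kn n) = 2 * n"
proof -
  interpret group "SP n" by (rule group_SP)
  have "Kgen n \<in> carrier (SP n)"
    using Kgen_Pn[OF assms] by simp
  moreover have "ord (Kgen n) = 2 * n"
    using ord_unique[OF calculation] Kgen_pow[OF assms] rot_eq_one_iff[OF assms] by simp
  ultimately show ?thesis
    unfolding Kn_def using generate_pow_card by simp
qed

lemma card_rcosets_Kn:
  assumes "n \<ge> 1"
  shows "card (rcosets\<^bsub>SP n\<^esub> (Kn n)) = 2 ^ (n - 1) * fact (n - 1)"
proof -
  interpret group "SP n" by (rule group_SP)
  have "subgroup (Kn n) (SP n)"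
    unfolding Kn_def using Kgen_Pn[OF assms] by (intro generate_is_subgroup) auto
  then have "card (rcosets\<^bsub>SP n\<^esub> (Kn n)) * (2 * n) = 2 ^ n * fact n"
    by (metis lagrange card_Kn[OF assms] card_Pn order_def SP_simps(1))
  moreover have "(2::nat) ^ n * fact n = 2 ^ (n - 1) * fact (n - 1) * (2 * n)"
    using assms by (cases n) (simp_all add: algebra_simps)
  ultimately show ?thesis
    using assms by simp
qed

theorem mainTheorem5:
  fixes n :: nat
  assumes "n \<ge> 2"
  shows "(\<exists>f. bij_betw f (Ospace n) (rcosets\<^bsub>SP n\<^esub> (Kn n)))
         \<and> card (Ospace n) = 2 ^ (n - 1) * fact (n - 1)
         \<and> (\<exists>g. bij_betw g (strata n) (Ospace_orbits n))
         \<and> card (strata n) = 2 ^ (n - 2) * fact (n - 1)"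
proof (intro conjI)
  have "card (rcosets\<^bsub>SP n\<^esub> (Kn n)) = card (Ospace n)"
    using assms by (simp add: card_rcosets_Kn card_Ospace)
  moreover have "card (Ospace n) > 0"
    by (simp add: card_Ospace)
  ultimately show "\<exists>f. bij_betw f (Ospace n) (rcosets\<^bsub>SP n\<^esub> (Kn n))"
    by (intro finite_same_card_bij) (auto intro: card_ge_0_finite)
  show "card (Ospace n) = 2 ^ (n - 1) * fact (n - 1)"
    by (rule card_Ospace)
  show "\<exists>g. bij_betw g (strata n) (Ospace_orbits n)"
    using strata_bij_Ospace_orbits by blast
  show "card (strata n) = 2 ^ (n - 2) * fact (n - 1)"
    using bij_betw_same_card[OF strata_bij_Ospace_orbits] card_Ospace_orbits[OF assms] by simp
qed

end
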